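(* Let $\Omega\subset\mathbb R^n$ be a quasi-homogeneous properly convex affine domain. Then $\Omega$ is strictly convex if and only if its asymptotic cone $\mathrm{AC}(\Omega)$ is one-dimensional.
   Context: An affine domain is a connected open subset $\Omega\subset\mathbb R^n$; it is quasi-homogeneous if there are a compact $K\subset\Omega$ and a subgroup $G$ of the group $\mathrm{Aut}_{\mathrm{aff}}(\Omega)$ of affine transformations preserving $\Omega$ with $GK=\Omega$. A convex affine domain is properly convex if it contains no complete affine line; it is strictly convex if its boundary in $\mathbb R^n$ contains no nondegenerate line segment. The asymptotic cone is $\mathrm{AC}(\Omega)=\{u\in\mathbb R^n\mid x+tu\in\Omega \text{ for all } x\in\Omega,\ t\ge 0\}$, and its dimension is that of its linear span. *)

theory Defs
  imports "HOL-Analysis.Analysis"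
begin

definition affine_domain :: "'a::euclidean_space set \<Rightarrow> bool" where
  "affine_domain \<Omega> \<longleftrightarrow> open \<Omega> \<and> connected \<Omega> \<and> \<Omega> \<noteq> {}"

definition affine_transformation :: "('a::euclidean_space \<Rightarrow> 'a) \<Rightarrow> bool" where
  "affine_transformation f \<longleftrightarrow> (\<exists>L b. linear L \<and> bij L \<and> (\<forall>x. f x = L x + b))"

definition Aut_aff :: "'a::euclidean_space set \<Rightarrow> ('a \<Rightarrow> 'a) set" where
  "Aut_aff \<Omega> = {f. affine_transformation f \<and> f ` \<Omega> = \<Omega>}"

definition aff_subgroup :: "('a::euclidean_space \<Rightarrow> 'a) set \<Rightarrow> 'a set \<Rightarrow> bool" where
  "aff_subgroup G \<Omega> \<longleftrightarrow> G \<subseteq> Aut_aff \<Omega> \<and> id \<in> G \<and>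
     (\<forall>f\<in>G. \<forall>g\<in>G. f \<circ> g \<in> G) \<and> (\<forall>f\<in>G. inv f \<in> G)"

definition quasi_homogeneous :: "'a::euclidean_space set \<Rightarrow> bool" where
  "quasi_homogeneous \<Omega> \<longleftrightarrow>
     (\<exists>K G. compact K \<and> K \<subseteq> \<Omega> \<and> aff_subgroup G \<Omega> \<and> (\<Union>g\<in>G. g ` K) = \<Omega>)"

definition properly_convex :: "'a::euclidean_space set \<Rightarrow> bool" where
  "properly_convex \<Omega> \<longleftrightarrow> convex \<Omega> \<and>
     \<not> (\<exists>x v. v \<noteq> 0 \<and> (\<forall>t::real. x + t *\<^sub>R v \<in> \<Omega>))"

definition strictly_convex :: "'a::euclidean_space set \<Rightarrow> bool" where
  "strictly_convex \<Omega> \<longleftrightarrow> convex \<Omega> \<and>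
     \<not> (\<exists>a b. a \<noteq> b \<and> closed_segment a b \<subseteq> frontier \<Omega>)"

definition asymptotic_cone :: "'a::euclidean_space set \<Rightarrow> 'a set" where
  "asymptotic_cone \<Omega> = {u. \<forall>x\<in>\<Omega>. \<forall>t::real. t \<ge> 0 \<longrightarrow> x + t *\<^sub>R u \<in> \<Omega>}"

end

(* Every affine automorphism of \<Omega> transports the configuration around a point
   x onto the configuration around its preimage, and quasi-homogeneity lets us choose that
   preimage in the compact set K. Since \<Omega> contains no line, chords of the closure through
   points of K are uniformly bounded. Hence any sequence of configurations, moved into K and
   renormalised by the linear parts of the automorphisms, has a convergent subsequence:
   outside points stay outside, points of the closure stay in the closure, and rays in the
   closure become directions of the asymptotic cone AC.

   If AC contains two independent directions u and v, rescaling along x0 + n (u + v) at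
   scale n produces a segment in the boundary. Conversely, let AC be the ray of u and suppose
   the boundary contains a segment. Rescaling at its midpoint gives a boundary segment
   through a point p whose ray p + t u, t > 0, enters \<Omega>. Follow that segment to its far end
   q. Rescaling once more at q (an endpoint if q + t u enters \<Omega>, a corner otherwise) turns
   both edges at q into directions of AC, hence into multiples of u, and this moves a point
   outside \<Omega> onto an interior point. *)

theory Submission
  imports Defs
begin

section \<open>Open convex sets and their asymptotic cones\<close>

lemma convex_segment_point:
  "convex C \<Longrightarrow> a \<in> C \<Longrightarrow> b \<in> C \<Longrightarrow> 0 \<le> t \<Longrightarrow> t \<le> 1 \<Longrightarrow> a + t *\<^sub>R (b - a) \<in> C"
  using convexD_alt[of C a b t] by (simp add: algebra_simps)

lemma convex_triangle_point:
  assumes "convex C" and base: "\<And>s. \<bar>s\<bar> \<le> 1 \<Longrightarrow> m + s *\<^sub>R e \<in> C" and "x \<in> C"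
    and "0 \<le> l" "l < 1" "\<bar>s\<bar> \<le> 1 - l"
  shows "m + l *\<^sub>R (x - m) + s *\<^sub>R e \<in> C"
proof -
  define s' where "s' = s / (1 - l)"
  have "\<bar>s'\<bar> \<le> 1" using assms(4-6) by (simp add: s'_def abs_divide divide_le_eq_1)
  then have "(m + s' *\<^sub>R e) + l *\<^sub>R (x - (m + s' *\<^sub>R e)) \<in> C"
    using base assms(3-5) by (intro convex_segment_point[OF assms(1)]) auto
  moreover have "(1 - l) * s' = s" using assms(5) by (simp add: s'_def)
  then have "(m + s' *\<^sub>R e) + l *\<^sub>R (x - (m + s' *\<^sub>R e)) = m + l *\<^sub>R (x - m) + s *\<^sub>R e"
    by (simp add: algebra_simps flip: scaleR_add_left)
  ultimately show ?thesis by simp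
qed

lemma open_convex_segment_point:
  fixes S :: "'a::euclidean_space set"
  assumes "open S" "convex S" "a \<in> S" "b \<in> closure S" "0 \<le> t" "t < 1"
  shows "a + t *\<^sub>R (b - a) \<in> S"
proof -
  have "b - (1 - t) *\<^sub>R (b - a) \<in> interior S"
    using assms by (intro mem_interior_closure_convex_shrink) (auto simp: interior_open)
  then show ?thesis
    using \<open>open S\<close> by (simp add: interior_open algebra_simps)
qed

lemma open_convex_shrink:
  fixes S :: "'a::euclidean_space set"
  assumes "open S" "convex S" "c \<in> closure S" "z \<in> S" "0 < t" "t \<le> 1"
  shows "c + t *\<^sub>R (z - c) \<in> S"
  using open_convex_segment_point[OF assms(1,2,4,3), of "1 - t"] assms(5,6)
  by (simp add: algebra_simps)

lemma closed_limit_along_line: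
  fixes C :: "'a::real_normed_vector set"
  assumes "closed C" and "\<And>l. 0 < l \<Longrightarrow> l \<le> 1 \<Longrightarrow> a + l *\<^sub>R b \<in> C"
  shows "a \<in> C"
proof -
  have "((\<lambda>l. a + l *\<^sub>R b) \<longlongrightarrow> a + 0 *\<^sub>R b) (at_right 0)"
    by (intro tendsto_intros)
  moreover have "\<forall>\<^sub>F l in at_right 0. l \<in> {0<..<1::real}"
    by (rule eventually_at_right_real) simp
  then have "\<forall>\<^sub>F l in at_right 0. a + l *\<^sub>R b \<in> C"
    by eventually_elim (use assms(2) in auto)
  ultimately show ?thesis
    using Lim_in_closed_set[OF assms(1)] by fastforce
qed

lemma line_avoids_open_convex:
  fixes S :: "'a::euclidean_space set"
  assumes "open S" "convex S" "p \<notin> S" "p + e \<in> closure S" "p - e \<in> closure S"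
  shows "p + s *\<^sub>R e \<notin> S"
proof
  assume ps: "p + s *\<^sub>R e \<in> S"
  have through_p: "(p + s *\<^sub>R e) + (\<bar>s\<bar> / (\<bar>s\<bar> + 1)) *\<^sub>R (b - (p + s *\<^sub>R e)) \<in> S"
    if "b \<in> closure S" for b
    using open_convex_segment_point[OF assms(1,2) ps that] by simp
  consider "s > 0" | "s < 0" | "s = 0" by linarith
  then show False
  proof cases
    case 1
    have "(p - e) - (p + s *\<^sub>R e) = (- (s + 1)) *\<^sub>R e" by (simp add: algebra_simps)
    then have "(s / (s + 1)) *\<^sub>R ((p - e) - (p + s *\<^sub>R e)) = ((s / (s + 1)) * - (s + 1)) *\<^sub>R e"
      by simp
    also have "(s / (s + 1)) * - (s + 1) = - s" using 1 by (simp add: field_simps)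
    finally show False using through_p[OF assms(5)] 1 assms(3) by simp
  next
    case 2
    have "(p + e) - (p + s *\<^sub>R e) = (- s + 1) *\<^sub>R e" by (simp add: algebra_simps)
    then have "(- s / (- s + 1)) *\<^sub>R ((p + e) - (p + s *\<^sub>R e)) = ((- s / (- s + 1)) * (- s + 1)) *\<^sub>R e"
      by simp
    also have "(- s / (- s + 1)) * (- s + 1) = - s" using 2 by (simp add: field_simps)
    finally show False using through_p[OF assms(4)] 2 assms(3) by simp
  qed (use ps assms(3) in simp)
qed

lemma asymptotic_coneD: "w \<in> asymptotic_cone S \<Longrightarrow> x \<in> S \<Longrightarrow> 0 \<le> t \<Longrightarrow> x + t *\<^sub>R w \<in> S"
  by (simp add: asymptotic_cone_def)

lemma asymptotic_cone_scaleR: "w \<in> asymptotic_cone S \<Longrightarrow> 0 \<le> c \<Longrightarrow> c *\<^sub>R w \<in> asymptotic_cone S"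
  by (simp add: asymptotic_cone_def)

lemma asymptotic_cone_conic: "conic (asymptotic_cone S)"
  by (simp add: asymptotic_cone_scaleR conic_def)

lemma asymptotic_cone_add:
  assumes "v \<in> asymptotic_cone S" "w \<in> asymptotic_cone S"
  shows "v + w \<in> asymptotic_cone S"
  unfolding asymptotic_cone_def
proof (intro CollectI ballI allI impI)
  fix x and t :: real assume "x \<in> S" "0 \<le> t"
  then have "(x + t *\<^sub>R v) + t *\<^sub>R w \<in> S"
    using assms by (simp add: asymptotic_cone_def)
  then show "x + t *\<^sub>R (v + w) \<in> S" by (simp add: algebra_simps)
qed

lemma asymptotic_cone_extreme_scaled:
  assumes "\<And>e. 0 < e \<Longrightarrow> v - e *\<^sub>R u \<notin> asymptotic_cone S" "0 < a" "0 < b"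
  shows "a *\<^sub>R v - b *\<^sub>R u \<notin> asymptotic_cone S"
proof
  assume "a *\<^sub>R v - b *\<^sub>R u \<in> asymptotic_cone S"
  then have "(1 / a) *\<^sub>R (a *\<^sub>R v - b *\<^sub>R u) \<in> asymptotic_cone S"
    using assms(2) by (intro asymptotic_cone_scaleR) auto
  moreover have "(1 / a) *\<^sub>R (a *\<^sub>R v - b *\<^sub>R u) = v - (b / a) *\<^sub>R u"
    using assms(2) by (simp add: scaleR_diff_right)
  moreover have "v - (b / a) *\<^sub>R u \<notin> asymptotic_cone S"
    using assms(2,3) by (intro assms(1)) simp
  ultimately show False by simp
qed

lemma asymptotic_cone_closure:
  assumes "w \<in> asymptotic_cone S" "x \<in> closure S" "0 \<le> t"
  shows "x + t *\<^sub>R w \<in> closure S"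
proof -
  have "(+) (t *\<^sub>R w) ` S \<subseteq> S"
    using assms(1,3) by (auto simp: asymptotic_cone_def add.commute)
  then have "(+) (t *\<^sub>R w) ` closure S \<subseteq> closure S"
    by (metis closure_mono closure_translation)
  then show ?thesis using assms(2) by (auto simp: add.commute)
qed

lemma asymptotic_cone_if_ray_in_closure:
  fixes S :: "'a::euclidean_space set"
  assumes "open S" "convex S" "p \<in> closure S" and ray: "\<And>t. 0 \<le> t \<Longrightarrow> p + t *\<^sub>R w \<in> closure S"
  shows "w \<in> asymptotic_cone S"
  unfolding asymptotic_cone_def
proof (intro CollectI ballI allI impI)
  fix x and t :: real assume x: "x \<in> S" and t: "0 \<le> t"
  have cl: "x + s *\<^sub>R w \<in> closure S" if "0 \<le> s" for s
  proof (rule closed_limit_along_line[where b = "p - x"])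
    fix l :: real assume l: "0 < l" "l \<le> 1"
    have "x + l *\<^sub>R ((p + (s / l) *\<^sub>R w) - x) \<in> closure S"
      using convex_segment_point[OF convex_closure[OF assms(2)] closure_subset[THEN subsetD, OF x]
          ray] l that by simp
    then show "(x + s *\<^sub>R w) + l *\<^sub>R (p - x) \<in> closure S"
      using l by (simp add: algebra_simps)
  qed simp
  have "x + (1/2) *\<^sub>R ((x + (2 * t) *\<^sub>R w) - x) \<in> S"
    by (rule open_convex_segment_point[OF assms(1,2) x cl]) (use t in auto)
  then show "x + t *\<^sub>R w \<in> S" by simp
qed

lemma closed_asymptotic_cone:
  fixes S :: "'a::euclidean_space set"
  assumes "open S" "convex S" "x \<in> S"
  shows "closed (asymptotic_cone S)"
proof -
  have "asymptotic_cone S = (\<Inter>t\<in>{0..}. (\<lambda>w. x + t *\<^sub>R w) -` closure S)"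
  proof (intro subset_antisym subsetI)
    fix w assume "w \<in> asymptotic_cone S"
    then show "w \<in> (\<Inter>t\<in>{0..}. (\<lambda>w. x + t *\<^sub>R w) -` closure S)"
      using assms(3) asymptotic_coneD closure_subset by fastforce
  next
    fix w assume "w \<in> (\<Inter>t\<in>{0..}. (\<lambda>w. x + t *\<^sub>R w) -` closure S)"
    then show "w \<in> asymptotic_cone S"
      using assms closure_subset by (intro asymptotic_cone_if_ray_in_closure[of S x]) auto
  qed
  moreover have "closed (\<Inter>t\<in>{0..}. (\<lambda>w. x + t *\<^sub>R w) -` closure S)"
    by (intro closed_INT ballI continuous_closed_vimage closed_closure continuous_intros)
  ultimately show ?thesis by simp
qed

lemma asymptotic_cone_pointed:
  assumes no_line: "\<And>x v. v \<noteq> 0 \<Longrightarrow> \<exists>t. x + t *\<^sub>R v \<notin> S"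
    and "x \<in> S" "w \<in> asymptotic_cone S" "- w \<in> asymptotic_cone S"
  shows "w = 0"
proof (rule ccontr)
  assume "w \<noteq> 0"
  then obtain t where "x + t *\<^sub>R w \<notin> S" using no_line by blast
  moreover have "x + t *\<^sub>R w \<in> S"
  proof (cases "0 \<le> t")
    case False
    then show ?thesis using asymptotic_coneD[OF assms(4,2), of "- t"] by simp
  qed (use asymptotic_coneD[OF assms(3,2)] in simp)
  ultimately show False by blast
qed

lemma ray_enters_open_convex:
  fixes S :: "'a::euclidean_space set"
  assumes "open S" "convex S" "u \<in> asymptotic_cone S" "q \<in> closure S"
    "0 < t0" "q + t0 *\<^sub>R u \<in> S" "0 < t"
  shows "q + t *\<^sub>R u \<in> S"
proof (cases "t0 \<le> t")
  case True
  then have "(q + t0 *\<^sub>R u) + (t - t0) *\<^sub>R u \<in> S"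
    using asymptotic_coneD[OF assms(3,6)] by simp
  then show ?thesis by (simp add: algebra_simps)
next
  case False
  have "(q + t0 *\<^sub>R u) + (1 - t / t0) *\<^sub>R (q - (q + t0 *\<^sub>R u)) \<in> S"
    using open_convex_segment_point[OF assms(1,2,6,4)] assms(5,7) False by simp
  then show ?thesis
    using assms(5) by (simp add: algebra_simps)
qed

lemma eventually_real_ge: "\<forall>\<^sub>F n in sequentially. c \<le> real n"
  using filterlim_real_sequentially by (simp add: filterlim_at_top)

text \<open>Junk unless \<open>w\<close> lies outside the asymptotic cone; otherwise the set is unbounded.\<close>
definition exit_time :: "'a::real_vector set \<Rightarrow> 'a \<Rightarrow> 'a \<Rightarrow> real" where
  "exit_time S z w = Sup {t. 0 \<le> t \<and> z + t *\<^sub>R w \<in> S}"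

lemma exit_time:
  fixes S :: "'a::euclidean_space set"
  assumes "open S" "convex S" "z \<in> S" "w \<notin> asymptotic_cone S"
  shows exit_time_pos: "0 < exit_time S z w"
    and mem_iff_less_exit_time: "0 \<le> t \<Longrightarrow> z + t *\<^sub>R w \<in> S \<longleftrightarrow> t < exit_time S z w"
    and exit_point_in_closure: "z + exit_time S z w *\<^sub>R w \<in> closure S"
proof -
  define I where "I = {t. 0 \<le> t \<and> z + t *\<^sub>R w \<in> S}"
  have zcl: "z \<in> closure S" using assms(3) closure_subset by blast
  obtain T where T: "0 \<le> T" "z + T *\<^sub>R w \<notin> closure S"
    using asymptotic_cone_if_ray_in_closure[OF assms(1,2) zcl] assms(4) by blast
  have down: "t' \<in> I" if "t \<in> I" "0 \<le> t'" "t' \<le> t" for t t'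
  proof (cases "t = 0")
    case False
    then have "z + (t' / t) *\<^sub>R ((z + t *\<^sub>R w) - z) \<in> S"
      using that by (intro convex_segment_point[OF assms(2,3)]) (auto simp: I_def)
    then show ?thesis using False that(2) by (simp add: I_def)
  qed (use that in \<open>simp add: I_def\<close>)
  have "t < T" if "t \<in> I" for t
    using down[OF that T(1)] T(2) closure_subset by (force simp: I_def)
  then have bdd: "bdd_above I" by (meson bdd_above.I less_imp_le)
  have "0 \<in> I" using assms(3) by (simp add: I_def)
  have up: "\<exists>t'\<in>I. t < t'" if "t \<in> I" for t
  proof -
    have "open ((\<lambda>t. z + t *\<^sub>R w) -` S)"
      using assms(1) by (intro continuous_open_vimage) (auto intro: continuous_intros)
    moreover have "t \<in> (\<lambda>t. z + t *\<^sub>R w) -` S" using that by (simp add: I_def)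
    ultimately obtain e where "e > 0" "ball t e \<subseteq> (\<lambda>t. z + t *\<^sub>R w) -` S"
      using open_contains_ball by blast
    moreover have "t + e / 2 \<in> ball t e" using \<open>e > 0\<close> by (simp add: dist_real_def)
    ultimately have "t + e / 2 \<in> I" using that by (auto simp: I_def)
    then show ?thesis using \<open>e > 0\<close> by force
  qed
  have iff: "t \<in> I \<longleftrightarrow> t < Sup I" if "0 \<le> t" for t
  proof
    assume "t \<in> I"
    then obtain t' where "t' \<in> I" "t < t'" using up by blast
    then show "t < Sup I" using cSup_upper[OF _ bdd] by (meson less_le_trans)
  next
    assume "t < Sup I"
    then obtain t' where "t' \<in> I" "t < t'" using less_cSup_iff[OF _ bdd] \<open>0 \<in> I\<close> by blast
    then show "t \<in> I" using down that by (meson less_imp_le)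
  qed
  show "0 < exit_time S z w"
    using iff[of 0] \<open>0 \<in> I\<close> by (simp add: exit_time_def I_def)
  show "0 \<le> t \<Longrightarrow> z + t *\<^sub>R w \<in> S \<longleftrightarrow> t < exit_time S z w"
    using iff[of t] by (simp add: exit_time_def I_def)
  have "(\<lambda>t. z + t *\<^sub>R w) ` closure I \<subseteq> closure S"
    using closure_subset by (intro image_closure_subset continuous_intros) (auto simp: I_def)
  moreover have "Sup I \<in> closure I" using closure_contains_Sup[OF _ bdd] \<open>0 \<in> I\<close> by blast
  ultimately show "z + exit_time S z w *\<^sub>R w \<in> closure S"
    by (auto simp: exit_time_def I_def)
qed

lemma ray_leaves_open_convex:
  fixes S :: "'a::euclidean_space set"
  assumes "open S" "convex S" "z \<in> S" "w \<notin> asymptotic_cone S"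
  shows "\<forall>\<^sub>F n in sequentially. z + real n *\<^sub>R w \<notin> S"
proof -
  from eventually_real_ge[of "exit_time S z w"] show ?thesis
    by eventually_elim (use mem_iff_less_exit_time[OF assms] in simp)
qed

lemma exit_time_tendsto_zero:
  fixes S :: "'a::euclidean_space set"
  assumes "open S" "convex S" "\<And>n. x n \<in> S" "x \<longlonglongrightarrow> q" "w \<notin> asymptotic_cone S"
    and beyond: "\<And>e. 0 < e \<Longrightarrow> q + e *\<^sub>R w \<notin> closure S"
  shows "(\<lambda>n. exit_time S (x n) w) \<longlonglongrightarrow> 0"
proof (rule order_tendstoI)
  fix e :: real assume "0 < e"
  have "(\<lambda>n. x n + (e / 2) *\<^sub>R w) \<longlonglongrightarrow> q + (e / 2) *\<^sub>R w" by (intro tendsto_intros assms(4))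
  moreover have "q + (e / 2) *\<^sub>R w \<in> - closure S" using beyond \<open>0 < e\<close> by simp
  ultimately have "\<forall>\<^sub>F n in sequentially. x n + (e / 2) *\<^sub>R w \<in> - closure S"
    by (intro topological_tendstoD) auto
  then show "\<forall>\<^sub>F n in sequentially. exit_time S (x n) w < e"
  proof eventually_elim
    case (elim n)
    then have "x n + (e / 2) *\<^sub>R w \<notin> S" using closure_subset by blast
    then show ?case
      using mem_iff_less_exit_time[OF assms(1,2,3,5), of "e / 2"] \<open>0 < e\<close> by simp
  qed
next
  fix e :: real assume "e < 0"
  then show "\<forall>\<^sub>F n in sequentially. e < exit_time S (x n) w"
    using exit_time_pos[OF assms(1,2,3,5)] by (auto intro: less_trans always_eventually)
qed

lemma closure_ray_far_end:
  fixes S :: "'a::euclidean_space set"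
  assumes "open S" "convex S" "p \<in> closure S" "p + E \<in> closure S" "E \<notin> asymptotic_cone S"
  obtains \<sigma> where "1 \<le> \<sigma>" "p + \<sigma> *\<^sub>R E \<in> closure S"
    "\<And>X. 0 < X \<Longrightarrow> p + (\<sigma> + X) *\<^sub>R E \<notin> closure S"
proof -
  obtain T where "0 \<le> T" "p + T *\<^sub>R E \<notin> closure S"
    using asymptotic_cone_if_ray_in_closure[OF assms(1-3)] assms(5) by blast
  define F where "F = {s. 0 \<le> s \<and> p + s *\<^sub>R E \<in> closure S}"
  have "s < T" if "s \<in> F" for s
  proof (rule ccontr)
    assume "\<not> s < T"
    then have "p + (T / s) *\<^sub>R ((p + s *\<^sub>R E) - p) \<in> closure S"
      using that \<open>0 \<le> T\<close> assms(3)
      by (intro convex_segment_point[OF convex_closure[OF assms(2)]]) (auto simp: F_def divide_le_eq_1)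
    moreover have "s \<noteq> 0" using \<open>\<not> s < T\<close> \<open>0 \<le> T\<close> \<open>p + T *\<^sub>R E \<notin> closure S\<close> assms(3) by auto
    ultimately show False using \<open>p + T *\<^sub>R E \<notin> closure S\<close> by simp
  qed
  then have bdd: "bdd_above F" by (meson bdd_above.I less_imp_le)
  have "1 \<in> F" using assms(4) by (simp add: F_def)
  have "closed ({0..} \<inter> (\<lambda>s. p + s *\<^sub>R E) -` closure S)"
    by (intro closed_Int closed_atLeast continuous_closed_vimage closed_closure continuous_intros)
  moreover have "F = {0..} \<inter> (\<lambda>s. p + s *\<^sub>R E) -` closure S" by (auto simp: F_def)
  ultimately have "closed F" by simp
  then have "Sup F \<in> F" using closed_contains_Sup[OF _ bdd] \<open>1 \<in> F\<close> by blast
  moreover have "1 \<le> Sup F" using cSup_upper[OF \<open>1 \<in> F\<close> bdd] .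
  moreover have "p + (Sup F + X) *\<^sub>R E \<notin> closure S" if "0 < X" for X
    using cSup_upper[OF _ bdd, of "Sup F + X"] that \<open>1 \<le> Sup F\<close> by (auto simp: F_def)
  ultimately show ?thesis using that by (simp add: F_def)
qed

text \<open>\<open>v'\<close> is the boundary ray of the planar section \<open>C \<inter> span {u, v}\<close> reached from \<open>v\<close> by
  moving in direction \<open>-u\<close>.\<close>
lemma closed_pointed_cone_extreme_direction:
  fixes C :: "'a::real_normed_vector set"
  assumes "closed C" "conic C" and add: "\<And>x y. x \<in> C \<Longrightarrow> y \<in> C \<Longrightarrow> x + y \<in> C"
    and pointed: "\<And>x. x \<in> C \<Longrightarrow> - x \<in> C \<Longrightarrow> x = 0"
    and u: "u \<in> C" "u \<noteq> 0" and v: "v \<in> C" "v \<notin> span {u}"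
  obtains v' c where "v' \<in> C" "\<And>e. 0 < e \<Longrightarrow> v' - e *\<^sub>R u \<notin> C" "u - c *\<^sub>R v' \<notin> C"
proof -
  have limit: "- a \<in> C" if "\<And>l. 0 < l \<Longrightarrow> l \<le> 1 \<Longrightarrow> b - (1 / l) *\<^sub>R a \<in> C" for a b
  proof (rule closed_limit_along_line[OF assms(1), where b = b])
    fix l :: real assume "0 < l" "l \<le> 1"
    then have "l *\<^sub>R (b - (1 / l) *\<^sub>R a) \<in> C" using that conicD[OF assms(2)] by simp
    then show "- a + l *\<^sub>R b \<in> C" using \<open>0 < l\<close> by (simp add: algebra_simps)
  qed
  define F where "F = {e. 0 \<le> e \<and> v - e *\<^sub>R u \<in> C}"
  have down: "e' \<in> F" if "e \<in> F" "0 \<le> e'" "e' \<le> e" for e e'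
  proof -
    have "(v - e *\<^sub>R u) + (e - e') *\<^sub>R u \<in> C"
      using that u(1) by (intro add conicD[OF assms(2)]) (auto simp: F_def)
    then show ?thesis using that(2) by (simp add: F_def algebra_simps)
  qed
  have "0 \<in> F" using v(1) by (simp add: F_def)
  have "closed ({0..} \<inter> (\<lambda>e. v - e *\<^sub>R u) -` C)"
    by (intro closed_Int closed_atLeast continuous_closed_vimage assms(1) continuous_intros)
  moreover have "F = {0..} \<inter> (\<lambda>e. v - e *\<^sub>R u) -` C" by (auto simp: F_def)
  ultimately have "closed F" by simp
  have bdd: "bdd_above F"
  proof (rule ccontr)
    assume "\<not> bdd_above F"
    then have inF: "e \<in> F" if "0 \<le> e" for e
      using down that by (meson bdd_above.I linear)
    have "- u \<in> C" by (rule limit[where a = u and b = v]) (use inF in \<open>simp add: F_def\<close>)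
    then show False using pointed u by blast
  qed
  define es where "es = Sup F"
  have "es \<in> F" unfolding es_def using closed_contains_Sup[OF _ bdd \<open>closed F\<close>] \<open>0 \<in> F\<close> by blast
  define v' where "v' = v - es *\<^sub>R u"
  have "v' \<in> C" using \<open>es \<in> F\<close> by (simp add: F_def v'_def)
  moreover have "v' - e *\<^sub>R u \<notin> C" if "0 < e" for e
  proof
    assume "v' - e *\<^sub>R u \<in> C"
    then have "es + e \<in> F" using \<open>es \<in> F\<close> that by (simp add: F_def v'_def algebra_simps)
    then show False using cSup_upper[OF _ bdd] that by (fastforce simp: es_def)
  qed
  moreover have "\<exists>c. u - c *\<^sub>R v' \<notin> C"
  proof (rule ccontr)
    assume "\<not> (\<exists>c. u - c *\<^sub>R v' \<notin> C)"
    then have "- v' \<in> C" by (intro limit[where a = v' and b = u]) simp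
    then have "v' = 0" using pointed \<open>v' \<in> C\<close> by blast
    then have "v = es *\<^sub>R u" by (simp add: v'_def)
    then show False using v(2) by (simp add: span_base span_mul)
  qed
  ultimately show ?thesis using that by blast
qed

lemma dim_eq_1_iff_subset_span:
  fixes A :: "'a::euclidean_space set"
  assumes "u \<in> A" "u \<noteq> 0"
  shows "dim A = 1 \<longleftrightarrow> A \<subseteq> span {u}"
proof
  assume "dim A = 1"
  show "A \<subseteq> span {u}"
  proof
    fix w assume "w \<in> A"
    show "w \<in> span {u}"
    proof (rule ccontr)
      assume "w \<notin> span {u}"
      then have "dim {w, u} = 2" using assms(2) by (simp add: dim_insert)
      moreover have "dim {w, u} \<le> dim A" using \<open>w \<in> A\<close> assms(1) by (intro dim_subset) auto
      ultimately show False using \<open>dim A = 1\<close> by simp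
    qed
  qed
next
  assume "A \<subseteq> span {u}"
  then have "dim A \<le> 1" using dim_subset[of A "span {u}"] assms(2) by simp
  moreover have "dim A \<noteq> 0" using assms by auto
  ultimately show "dim A = 1" by linarith
qed

section \<open>Rescaling limits in quasi-homogeneous convex domains\<close>

lemma compact_eventually_convergent_subseq:
  fixes f :: "nat \<Rightarrow> 'a::metric_space"
  assumes "compact S" "\<forall>\<^sub>F n in sequentially. f n \<in> S"
  obtains l r where "l \<in> S" "strict_mono r" "(f \<circ> r) \<longlonglongrightarrow> l"
proof -
  obtain N where N: "\<And>n. n \<ge> N \<Longrightarrow> f n \<in> S"
    using assms(2) by (auto simp: eventually_sequentially)
  obtain l r where "l \<in> S" "strict_mono r" "((\<lambda>n. f (n + N)) \<circ> r) \<longlonglongrightarrow> l"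
    using seq_compactE[OF compact_imp_seq_compact[OF assms(1)], of "\<lambda>n. f (n + N)"] N by auto
  moreover have "strict_mono (\<lambda>n. r n + N)"
    using \<open>strict_mono r\<close> by (simp add: strict_mono_def)
  ultimately show ?thesis
    using that[of l "\<lambda>n. r n + N"] by (simp add: o_def)
qed

text \<open>Otherwise normalised ever longer chords through points of \<open>K\<close> converge to a line in the
  closure, whose direction and its negative both lie in the asymptotic cone.\<close>
lemma bounded_chords:
  fixes S :: "'a::euclidean_space set"
  assumes "open S" "convex S" and no_line: "\<And>x v. v \<noteq> 0 \<Longrightarrow> \<exists>t. x + t *\<^sub>R v \<notin> S"
    and "compact K" "K \<subseteq> S"
  obtains M where "\<And>y w. y \<in> K \<Longrightarrow> y + w \<in> closure S \<Longrightarrow> y - w \<in> closure S \<Longrightarrow> norm w \<le> M"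
proof -
  have "\<exists>M. \<forall>y\<in>K. \<forall>w. y + w \<in> closure S \<longrightarrow> y - w \<in> closure S \<longrightarrow> norm w \<le> M"
  proof (rule ccontr)
    assume "\<not> ?thesis"
    then have "\<forall>n::nat. \<exists>y w. y \<in> K \<and> y + w \<in> closure S \<and> y - w \<in> closure S \<and> real n < norm w"
      by (meson not_le)
    then obtain y w where yw: "\<And>n. y n \<in> K" "\<And>n. y n + w n \<in> closure S"
      "\<And>n. y n - w n \<in> closure S" "\<And>n. real n < norm (w n)"
      by metis
    have wpos: "0 < norm (w n)" for n
      using yw(4)[of n] by (meson le_less_trans of_nat_0_le_iff)
    define d where "d n = (1 / norm (w n)) *\<^sub>R w n" for n
    have chord: "y n + s *\<^sub>R d n \<in> closure S" if "\<bar>s\<bar> \<le> norm (w n)" for n s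
    proof -
      have "y n + (\<bar>s\<bar> / norm (w n)) *\<^sub>R (b - y n) \<in> closure S" if "b \<in> closure S" for b
        using \<open>\<bar>s\<bar> \<le> norm (w n)\<close> wpos[of n] yw(1) \<open>K \<subseteq> S\<close> closure_subset that
        by (intro convex_segment_point[OF convex_closure[OF assms(2)]]) auto
      from this[OF yw(2)[of n]] this[OF yw(3)[of n]] show ?thesis
        by (cases "0 \<le> s") (simp_all add: d_def)
    qed
    have "\<forall>\<^sub>F n in sequentially. (y n, d n) \<in> K \<times> sphere 0 1"
      using yw(1) wpos by (intro always_eventually) (simp add: d_def)
    then obtain l r where l: "l \<in> K \<times> sphere 0 1" and r: "strict_mono r"
      and lim: "((\<lambda>n. (y n, d n)) \<circ> r) \<longlonglongrightarrow> l"
      by (rule compact_eventually_convergent_subseq[OF compact_Times[OF \<open>compact K\<close> compact_sphere]])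
    define y0 d0 where "y0 = fst l" and "d0 = snd l"
    have y0: "y0 \<in> S" and "norm d0 = 1" using l \<open>K \<subseteq> S\<close> by (auto simp: y0_def d0_def)
    have line: "y0 + s *\<^sub>R d0 \<in> closure S" for s
    proof (rule Lim_in_closed_set[OF closed_closure _ trivial_limit_sequentially])
      show "(\<lambda>n. y (r n) + s *\<^sub>R d (r n)) \<longlonglongrightarrow> y0 + s *\<^sub>R d0"
        using tendsto_fst[OF lim] tendsto_snd[OF lim]
        by (auto simp: y0_def d0_def o_def intro!: tendsto_intros)
      from eventually_real_ge[of "\<bar>s\<bar>"] have "\<forall>\<^sub>F n in sequentially. \<bar>s\<bar> \<le> norm (w n)"
        by eventually_elim (use yw(4) in \<open>meson less_imp_le order_trans\<close>)
      then show "\<forall>\<^sub>F n in sequentially. y (r n) + s *\<^sub>R d (r n) \<in> closure S"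
        using eventually_subseq[OF r] chord by (metis (mono_tags, lifting) eventually_mono)
    qed
    have y0cl: "y0 \<in> closure S" using y0 closure_subset by blast
    have "d0 \<in> asymptotic_cone S"
      by (rule asymptotic_cone_if_ray_in_closure[OF assms(1,2) y0cl line])
    moreover have "- d0 \<in> asymptotic_cone S"
    proof (rule asymptotic_cone_if_ray_in_closure[OF assms(1,2) y0cl])
      fix t :: real show "y0 + t *\<^sub>R - d0 \<in> closure S" using line[of "- t"] by simp
    qed
    ultimately have "d0 = 0" using asymptotic_cone_pointed[of S y0 d0] no_line y0 by blast
    then show False using \<open>norm d0 = 1\<close> by simp
  qed
  then show ?thesis using that by blast
qed

lemma Aut_aff_mem_iff:
  assumes "g \<in> Aut_aff S"
  shows "g z \<in> S \<longleftrightarrow> z \<in> S" and "g z \<in> closure S \<longleftrightarrow> z \<in> closure S"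
proof -
  obtain L b where L: "linear L" "bij L" and "\<And>x. g x = L x + b"
    using assms by (auto simp: Aut_aff_def affine_transformation_def)
  then have g: "g = (\<lambda>x. L x + b)" by (simp add: fun_eq_iff)
  have "inj g" using bij_is_inj[OF L(2)] by (simp add: g inj_def)
  have "g ` S = S" using assms by (simp add: Aut_aff_def)
  moreover have "g ` T = (+) b ` L ` T" for T by (simp add: g image_image add.commute)
  then have "g ` closure S = closure (g ` S)"
    by (simp add: closure_translation closure_injective_linear_image[OF L(1) bij_is_inj[OF L(2)]])
  ultimately have "g ` closure S = closure S" by simp
  with \<open>g ` S = S\<close> \<open>inj g\<close> show "g z \<in> S \<longleftrightarrow> z \<in> S" and "g z \<in> closure S \<longleftrightarrow> z \<in> closure S"
    by (metis inj_image_mem_iff)+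
qed

locale quasi_homogeneous_convex_domain =
  fixes \<Omega> :: "'a::euclidean_space set" and K :: "'a set"
  assumes open_domain: "open \<Omega>" and convex_domain: "convex \<Omega>" and nonempty_domain: "\<Omega> \<noteq> {}"
    and no_line: "\<And>x v. v \<noteq> 0 \<Longrightarrow> \<exists>t. x + t *\<^sub>R v \<notin> \<Omega>"
    and compact_K: "compact K" and K_subset: "K \<subseteq> \<Omega>"
    and K_covers: "\<And>x. x \<in> \<Omega> \<Longrightarrow> \<exists>g\<in>Aut_aff \<Omega>. \<exists>y\<in>K. g y = x"
begin

abbreviation AC where "AC \<equiv> asymptotic_cone \<Omega>"

lemma closed_AC: "closed AC"
  using closed_asymptotic_cone[OF open_domain convex_domain] nonempty_domain by blast

lemma AC_pointed: "w \<in> AC \<Longrightarrow> - w \<in> AC \<Longrightarrow> w = 0"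
  using asymptotic_cone_pointed[OF no_line] nonempty_domain by blast

lemma translate_into_K:
  assumes "x \<in> \<Omega>"
  obtains y L where "y \<in> K" "linear L"
    "\<And>w. x + w \<in> \<Omega> \<longleftrightarrow> y + L w \<in> \<Omega>" "\<And>w. x + w \<in> closure \<Omega> \<longleftrightarrow> y + L w \<in> closure \<Omega>"
proof -
  obtain g y where g: "g \<in> Aut_aff \<Omega>" and "y \<in> K" "g y = x"
    using K_covers assms by blast
  then obtain L0 b where L0: "linear L0" "bij L0" and gL0: "\<And>z. g z = L0 z + b"
    by (auto simp: Aut_aff_def affine_transformation_def)
  define L where "L = inv L0"
  have "linear L"
    unfolding L_def using L0 by (simp add: bij_is_inj inj_linear_imp_inv_linear)
  have "g (y + L w) = x + w" for w
    using \<open>g y = x\<close> gL0 linear_add[OF L0(1)] bij_is_surj[OF L0(2)]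
    by (simp add: L_def surj_f_inv_f algebra_simps)
  then show ?thesis
    using that[OF \<open>y \<in> K\<close> \<open>linear L\<close>] Aut_aff_mem_iff[OF g] by metis
qed

lemma translate_seq_into_K:
  assumes "\<And>n. x n \<in> \<Omega>"
  obtains y L where "\<And>n. y n \<in> K" "\<And>n. linear (L n)"
    "\<And>n w. x n + w \<in> \<Omega> \<longleftrightarrow> y n + L n w \<in> \<Omega>"
    "\<And>n w. x n + w \<in> closure \<Omega> \<longleftrightarrow> y n + L n w \<in> closure \<Omega>"
proof -
  have "\<forall>n. \<exists>y L. y \<in> K \<and> linear L \<and> (\<forall>w. x n + w \<in> \<Omega> \<longleftrightarrow> y + L w \<in> \<Omega>) \<and>
      (\<forall>w. x n + w \<in> closure \<Omega> \<longleftrightarrow> y + L w \<in> closure \<Omega>)"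
  proof
    fix n
    obtain y L where "y \<in> K" "linear L"
      "\<And>w. x n + w \<in> \<Omega> \<longleftrightarrow> y + L w \<in> \<Omega>" "\<And>w. x n + w \<in> closure \<Omega> \<longleftrightarrow> y + L w \<in> closure \<Omega>"
      using translate_into_K[OF assms] by blast
    then show "\<exists>y L. y \<in> K \<and> linear L \<and> (\<forall>w. x n + w \<in> \<Omega> \<longleftrightarrow> y + L w \<in> \<Omega>) \<and>
      (\<forall>w. x n + w \<in> closure \<Omega> \<longleftrightarrow> y + L w \<in> closure \<Omega>)" by blast
  qed
  then obtain y L where y: "\<And>n. y n \<in> K" and L: "\<And>n. linear (L n)"
    and mem: "\<And>n w. x n + w \<in> \<Omega> \<longleftrightarrow> y n + L n w \<in> \<Omega>"
    and mem_cl: "\<And>n w. x n + w \<in> closure \<Omega> \<longleftrightarrow> y n + L n w \<in> closure \<Omega>"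
    by metis
  show ?thesis by (rule that[OF y L mem mem_cl])
qed

text \<open>Blow-up: rescale a configuration around \<open>x n\<close> by the affine automorphisms moving \<open>x n\<close> into \<open>K\<close>,
  with the vectors \<open>a n\<close>, \<open>b n\<close> as the new unit vectors. The chord bound of \<open>K\<close> keeps the rescaled
  vectors bounded, so a subsequence converges.\<close>
lemma rescaled_limit:
  assumes x: "\<And>n. x n \<in> \<Omega>"
    and a: "\<forall>\<^sub>F n in sequentially. x n + a n \<in> closure \<Omega> \<and> x n - a n \<in> closure \<Omega>"
    and b: "\<forall>\<^sub>F n in sequentially. x n + b n \<in> closure \<Omega> \<and> x n - b n \<in> closure \<Omega>"
  obtains y A B where "y \<in> \<Omega>"
    "\<And>s t. \<forall>\<^sub>F n in sequentially. x n + s *\<^sub>R a n + t *\<^sub>R b n \<in> closure \<Omega>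
      \<Longrightarrow> y + s *\<^sub>R A + t *\<^sub>R B \<in> closure \<Omega>"
    "\<And>s t. \<forall>\<^sub>F n in sequentially. x n + s *\<^sub>R a n + t *\<^sub>R b n \<notin> \<Omega>
      \<Longrightarrow> y + s *\<^sub>R A + t *\<^sub>R B \<notin> \<Omega>"
proof -
  obtain y L where y: "\<And>n. y n \<in> K" and L: "\<And>n. linear (L n)"
    and mem: "\<And>n w. x n + w \<in> \<Omega> \<longleftrightarrow> y n + L n w \<in> \<Omega>"
    and mem_cl: "\<And>n w. x n + w \<in> closure \<Omega> \<longleftrightarrow> y n + L n w \<in> closure \<Omega>"
    using translate_seq_into_K[of x, OF x] by blast
  define A where "A n = L n (a n)" for n
  define B where "B n = L n (b n)" for n
  have shift: "y n + s *\<^sub>R A n + t *\<^sub>R B n = y n + L n (s *\<^sub>R a n + t *\<^sub>R b n)" for n s t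
    using linear_add[OF L] linear_scale[OF L] by (simp add: A_def B_def add.assoc)
  have transfer: "x n + s *\<^sub>R a n + t *\<^sub>R b n \<in> \<Omega> \<longleftrightarrow> y n + s *\<^sub>R A n + t *\<^sub>R B n \<in> \<Omega>"
    "x n + s *\<^sub>R a n + t *\<^sub>R b n \<in> closure \<Omega> \<longleftrightarrow> y n + s *\<^sub>R A n + t *\<^sub>R B n \<in> closure \<Omega>" for n s t
    unfolding shift mem[symmetric] mem_cl[symmetric] by (simp_all add: add.assoc)
  obtain M where M: "\<And>y w. y \<in> K \<Longrightarrow> y + w \<in> closure \<Omega> \<Longrightarrow> y - w \<in> closure \<Omega> \<Longrightarrow> norm w \<le> M"
    using bounded_chords[OF open_domain convex_domain no_line compact_K K_subset] by blast
  have "\<forall>\<^sub>F n in sequentially. (y n, A n, B n) \<in> K \<times> cball 0 M \<times> cball 0 M"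
    using a b
  proof eventually_elim
    case (elim n)
    then have "y n + A n \<in> closure \<Omega>" "y n - A n \<in> closure \<Omega>"
      "y n + B n \<in> closure \<Omega>" "y n - B n \<in> closure \<Omega>"
      using transfer(2)[of n 1 0] transfer(2)[of n "-1" 0]
        transfer(2)[of n 0 1] transfer(2)[of n 0 "-1"] by auto
    then show ?case using M y by auto
  qed
  then obtain l r where "l \<in> K \<times> cball 0 M \<times> cball 0 M" and r: "strict_mono r"
    and lim: "((\<lambda>n. (y n, A n, B n)) \<circ> r) \<longlonglongrightarrow> l"
    by (rule compact_eventually_convergent_subseq[OF compact_Times[OF compact_K
          compact_Times[OF compact_cball compact_cball]]])
  then have "fst l \<in> \<Omega>" using K_subset by auto
  have ly: "(\<lambda>n. y (r n)) \<longlonglongrightarrow> fst l" and lA: "(\<lambda>n. A (r n)) \<longlonglongrightarrow> fst (snd l)"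
    and lB: "(\<lambda>n. B (r n)) \<longlonglongrightarrow> snd (snd l)"
    using tendsto_fst[OF lim] tendsto_fst[OF tendsto_snd[OF lim]] tendsto_snd[OF tendsto_snd[OF lim]]
    by (simp_all add: o_def)
  have lim_comb: "(\<lambda>n. y (r n) + s *\<^sub>R A (r n) + t *\<^sub>R B (r n)) \<longlonglongrightarrow>
      fst l + s *\<^sub>R fst (snd l) + t *\<^sub>R snd (snd l)" for s t
    by (intro tendsto_add tendsto_scaleR tendsto_const ly lA lB)
  show ?thesis
  proof (rule that[OF \<open>fst l \<in> \<Omega>\<close>])
    fix s t
    assume "\<forall>\<^sub>F n in sequentially. x n + s *\<^sub>R a n + t *\<^sub>R b n \<in> closure \<Omega>"
    then have "\<forall>\<^sub>F n in sequentially. y (r n) + s *\<^sub>R A (r n) + t *\<^sub>R B (r n) \<in> closure \<Omega>"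
      using eventually_subseq[OF r] transfer(2) by auto
    then show "fst l + s *\<^sub>R fst (snd l) + t *\<^sub>R snd (snd l) \<in> closure \<Omega>"
      by (rule Lim_in_closed_set[OF closed_closure _ trivial_limit_sequentially lim_comb])
  next
    fix s t
    assume "\<forall>\<^sub>F n in sequentially. x n + s *\<^sub>R a n + t *\<^sub>R b n \<notin> \<Omega>"
    then have "\<forall>\<^sub>F n in sequentially. y (r n) + s *\<^sub>R A (r n) + t *\<^sub>R B (r n) \<in> - \<Omega>"
      using eventually_subseq[OF r] transfer(1) by auto
    then show "fst l + s *\<^sub>R fst (snd l) + t *\<^sub>R snd (snd l) \<notin> \<Omega>"
      using Lim_in_closed_set[OF _ _ trivial_limit_sequentially lim_comb] open_domain by blast
  qed
qed

text \<open>Blow up at points approaching a boundary point \<open>p\<close> from an interior point: the approach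
  direction becomes a nonzero direction of the asymptotic cone.\<close>
lemma asymptotic_cone_nontrivial: "\<exists>u\<in>AC. u \<noteq> 0"
proof -
  obtain v :: 'a where "v \<noteq> 0" using nonzero_Basis SOME_Basis by blast
  then have "\<Omega> \<noteq> UNIV" using no_line by blast
  then obtain p where "p \<in> frontier \<Omega>" using frontier_not_empty[OF nonempty_domain] by blast
  then have p: "p \<in> closure \<Omega>" "p \<notin> \<Omega>" using open_domain by (auto simp: frontier_def interior_open)
  obtain x0 where x0: "x0 \<in> \<Omega>" using nonempty_domain by blast
  define a where "a n = (1 / (real n + 2)) *\<^sub>R (x0 - p)" for n
  have along: "p + (s / (real n + 2)) *\<^sub>R (x0 - p) \<in> closure \<Omega>" if "0 \<le> s" "s \<le> real n + 2" for n s
    using that x0 closure_subset p(1)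
    by (intro convex_segment_point[OF convex_closure[OF convex_domain]]) auto
  have x: "p + a n \<in> \<Omega>" for n
    unfolding a_def by (rule open_convex_shrink[OF open_domain convex_domain p(1) x0]) auto
  have x_cl: "p + a n \<in> closure \<Omega>" for n using x closure_subset by blast
  have comb: "p + a n + s *\<^sub>R a n = p + ((1 + s) / (real n + 2)) *\<^sub>R (x0 - p)" for n s
    by (simp add: a_def add_divide_distrib algebra_simps)
  have along_a: "p + a n + s *\<^sub>R a n \<in> closure \<Omega>" if "-1 \<le> s" "1 + s \<le> real n + 2" for n s
    unfolding comb using along that by simp
  obtain y A B where y: "y \<in> \<Omega>"
    and lim_cl: "\<And>s t. \<forall>\<^sub>F n in sequentially. p + a n + s *\<^sub>R a n + t *\<^sub>R (0::'a) \<in> closure \<Omega>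
      \<Longrightarrow> y + s *\<^sub>R A + t *\<^sub>R B \<in> closure \<Omega>"
    and lim_out: "\<And>s t. \<forall>\<^sub>F n in sequentially. p + a n + s *\<^sub>R a n + t *\<^sub>R (0::'a) \<notin> \<Omega>
      \<Longrightarrow> y + s *\<^sub>R A + t *\<^sub>R B \<notin> \<Omega>"
  proof (rule rescaled_limit[of "\<lambda>n. p + a n" a "\<lambda>n. 0"])
    show "\<forall>\<^sub>F n in sequentially. p + a n + a n \<in> closure \<Omega> \<and> p + a n - a n \<in> closure \<Omega>"
      using along_a[of 1] p(1) by (intro always_eventually) auto
  qed (use x x_cl in \<open>auto intro!: always_eventually\<close>)
  have "A \<in> AC"
  proof (rule asymptotic_cone_if_ray_in_closure[OF open_domain convex_domain])
    show "y \<in> closure \<Omega>" using y closure_subset by blast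
    fix s :: real assume "0 \<le> s"
    have "\<forall>\<^sub>F n in sequentially. 1 + s \<le> real n + 2" using eventually_real_ge[of "s - 1"] by eventually_elim simp
    then have "\<forall>\<^sub>F n in sequentially. p + a n + s *\<^sub>R a n + 0 *\<^sub>R (0::'a) \<in> closure \<Omega>"
      by eventually_elim (use along_a \<open>0 \<le> s\<close> in auto)
    then show "y + s *\<^sub>R A \<in> closure \<Omega>" using lim_cl by fastforce
  qed
  moreover have "A \<noteq> 0"
    using lim_out[of "-1" 0] p(2) y by (auto simp: always_eventually)
  ultimately show ?thesis by blast
qed

section \<open>Two independent asymptotic directions give a boundary segment\<close>

text \<open>Blow up along \<open>x0 + n (u + v)\<close> at scale \<open>n\<close>: the segment appears in the limit on the face
  of the rescaled domain that lies in the direction of \<open>-u\<close>.\<close>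
lemma frontier_segment_from_two_directions:
  assumes u: "u \<in> AC" and v: "v \<in> AC"
    and v_extreme: "\<And>e. 0 < e \<Longrightarrow> v - e *\<^sub>R u \<notin> AC" and "u - c *\<^sub>R v \<notin> AC"
  obtains a b where "a \<noteq> b" "closed_segment a b \<subseteq> frontier \<Omega>"
proof -
  obtain x0 where x0: "x0 \<in> \<Omega>" using nonempty_domain by blast
  define x where "x n = x0 + real n *\<^sub>R (u + v)" for n
  have comb: "x n + s *\<^sub>R (real n *\<^sub>R u) + r *\<^sub>R (real n *\<^sub>R v)
      = x0 + real n *\<^sub>R ((1 + s) *\<^sub>R u + (1 + r) *\<^sub>R v)" for n s r
    by (simp add: x_def algebra_simps)
  have inside: "x n + s *\<^sub>R (real n *\<^sub>R u) + r *\<^sub>R (real n *\<^sub>R v) \<in> \<Omega>"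
    if "-1 \<le> s" "-1 \<le> r" for n s r
  proof -
    have "(1 + s) *\<^sub>R u + (1 + r) *\<^sub>R v \<in> AC"
      using that u v by (intro asymptotic_cone_add asymptotic_cone_scaleR) auto
    from asymptotic_coneD[OF this x0, of "real n"] show ?thesis unfolding comb by simp
  qed
  then have inside_cl: "x n + s *\<^sub>R (real n *\<^sub>R u) + r *\<^sub>R (real n *\<^sub>R v) \<in> closure \<Omega>"
    if "-1 \<le> s" "-1 \<le> r" for n s r
    using that closure_subset by blast
  obtain y U V where "y \<in> \<Omega>"
    and lim_cl: "\<And>s r. \<forall>\<^sub>F n in sequentially.
        x n + s *\<^sub>R (real n *\<^sub>R u) + r *\<^sub>R (real n *\<^sub>R v) \<in> closure \<Omega>
      \<Longrightarrow> y + s *\<^sub>R U + r *\<^sub>R V \<in> closure \<Omega>"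
    and lim_out: "\<And>s r. \<forall>\<^sub>F n in sequentially.
        x n + s *\<^sub>R (real n *\<^sub>R u) + r *\<^sub>R (real n *\<^sub>R v) \<notin> \<Omega>
      \<Longrightarrow> y + s *\<^sub>R U + r *\<^sub>R V \<notin> \<Omega>"
  proof (rule rescaled_limit[of x "\<lambda>n. real n *\<^sub>R u" "\<lambda>n. real n *\<^sub>R v"])
    show "x n \<in> \<Omega>" for n using inside[of 0 0 n] by simp
    show "\<forall>\<^sub>F n in sequentially. x n + real n *\<^sub>R u \<in> closure \<Omega> \<and> x n - real n *\<^sub>R u \<in> closure \<Omega>"
      using inside_cl[of 1 0] inside_cl[of "-1" 0] by (intro always_eventually) auto
    show "\<forall>\<^sub>F n in sequentially. x n + real n *\<^sub>R v \<in> closure \<Omega> \<and> x n - real n *\<^sub>R v \<in> closure \<Omega>"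
      using inside_cl[of 0 1] inside_cl[of 0 "-1"] by (intro always_eventually) auto
  qed blast
  have outside: "y + s *\<^sub>R U + r *\<^sub>R V \<notin> \<Omega>" if "(1 + s) *\<^sub>R u + (1 + r) *\<^sub>R v \<notin> AC" for s r
    by (rule lim_out, unfold comb, rule ray_leaves_open_convex[OF open_domain convex_domain x0 that])
  have "V \<noteq> 0"
    using outside[of 0 "- 1 - c"] \<open>y \<in> \<Omega>\<close> \<open>u - c *\<^sub>R v \<notin> AC\<close> by (auto simp: algebra_simps)
  have face: "y - U - r *\<^sub>R V \<in> frontier \<Omega>" if "0 \<le> r" "r < 1" for r
  proof -
    have "y + (-1) *\<^sub>R U + (- r) *\<^sub>R V \<in> closure \<Omega>"
      using that inside_cl[of "-1" "- r"] by (intro lim_cl always_eventually) auto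
    moreover have "y - U - r *\<^sub>R V \<in> - \<Omega>"
    proof (rule closed_limit_along_line[where b = "- U"])
      show "closed (- \<Omega>)" using open_domain by auto
      fix l :: real assume "0 < l" "l \<le> 1"
      have "(1 + (- 1 - l)) *\<^sub>R u + (1 + - r) *\<^sub>R v = (1 - r) *\<^sub>R v - l *\<^sub>R u"
        by (simp add: algebra_simps)
      moreover have "(1 - r) *\<^sub>R v - l *\<^sub>R u \<notin> AC"
        by (rule asymptotic_cone_extreme_scaled[OF v_extreme]) (use that \<open>0 < l\<close> in auto)
      ultimately have "(1 + (- 1 - l)) *\<^sub>R u + (1 + - r) *\<^sub>R v \<notin> AC" by (simp only: not_False_eq_True)
      then have "y + (- 1 - l) *\<^sub>R U + (- r) *\<^sub>R V \<notin> \<Omega>" by (rule outside)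
      moreover have "y - U - r *\<^sub>R V + l *\<^sub>R - U = y + (- 1 - l) *\<^sub>R U + (- r) *\<^sub>R V"
        by (simp add: algebra_simps)
      ultimately show "y - U - r *\<^sub>R V + l *\<^sub>R - U \<in> - \<Omega>" by (metis Compl_iff)
    qed
    ultimately show ?thesis using open_domain by (simp add: frontier_def interior_open)
  qed
  show ?thesis
  proof (rule that)
    show "y - U \<noteq> y - U - (1/2) *\<^sub>R V" using \<open>V \<noteq> 0\<close> by simp
    show "closed_segment (y - U) (y - U - (1/2) *\<^sub>R V) \<subseteq> frontier \<Omega>"
    proof
      fix z assume "z \<in> closed_segment (y - U) (y - U - (1/2) *\<^sub>R V)"
      then obtain t where "0 \<le> t" "t \<le> 1" "z = y - U - (t / 2) *\<^sub>R V"
        by (auto simp: in_segment algebra_simps)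
      then show "z \<in> frontier \<Omega>" using face[of "t / 2"] by simp
    qed
  qed
qed

lemma asymptotic_cone_subset_span_if_strictly_convex:
  assumes "strictly_convex \<Omega>" "u \<in> AC" "u \<noteq> 0"
  shows "AC \<subseteq> span {u}"
proof
  fix v assume "v \<in> AC"
  show "v \<in> span {u}"
  proof (rule ccontr)
    assume "v \<notin> span {u}"
    obtain v' c where v': "v' \<in> AC" "\<And>e. 0 < e \<Longrightarrow> v' - e *\<^sub>R u \<notin> AC" "u - c *\<^sub>R v' \<notin> AC"
      using closed_pointed_cone_extreme_direction[OF closed_AC asymptotic_cone_conic
          asymptotic_cone_add AC_pointed assms(2,3) \<open>v \<in> AC\<close> \<open>v \<notin> span {u}\<close>] by blast
    obtain a b where "a \<noteq> b" "closed_segment a b \<subseteq> frontier \<Omega>"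
      using frontier_segment_from_two_directions[OF assms(2) v'] by blast
    then show False using assms(1) by (auto simp: strictly_convex_def)
  qed
qed

section \<open>A one-dimensional asymptotic cone excludes boundary segments\<close>

lemma asymptotic_cone_multiple:
  assumes "AC \<subseteq> span {u}" "A \<in> AC" "A \<noteq> 0" "B \<in> AC"
  obtains s where "0 \<le> s" "B = s *\<^sub>R A"
proof -
  have "A \<in> range (\<lambda>k. k *\<^sub>R u)" "B \<in> range (\<lambda>k. k *\<^sub>R u)"
    using assms(1,2,4) by (auto simp: span_singleton)
  then obtain \<alpha> \<beta> where \<alpha>: "A = \<alpha> *\<^sub>R u" and \<beta>: "B = \<beta> *\<^sub>R u" by blast
  then have "\<alpha> \<noteq> 0" using assms(3) by auto
  define s where "s = \<beta> / \<alpha>"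
  have B: "B = s *\<^sub>R A" using \<open>\<alpha> \<noteq> 0\<close> by (simp add: \<alpha> \<beta> s_def)
  have "0 \<le> s"
  proof (rule ccontr)
    assume "\<not> 0 \<le> s"
    then have "(- 1 / s) *\<^sub>R B \<in> AC" using assms(4) by (intro asymptotic_cone_scaleR) auto
    then have "- A \<in> AC" using \<open>\<not> 0 \<le> s\<close> by (simp add: B)
    then show False using AC_pointed assms(2,3) by blast
  qed
  with B show ?thesis using that by blast
qed

text \<open>Blow up at \<open>q + h u\<close>, \<open>h \<rightarrow> 0\<close>, normalising \<open>E\<close> by the exit time \<open>r\<close> of that point in direction
  \<open>E\<close>: in the limit, \<open>-E\<close> becomes a direction of the asymptotic cone, hence a multiple of \<open>u\<close>,
  which makes the rescaled point \<open>q\<close> coincide with the interior limit point.\<close>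
lemma no_endpoint:
  assumes span: "AC \<subseteq> span {u}" and u: "u \<in> AC" and "0 < l"
    and behind: "\<And>X. 0 \<le> X \<Longrightarrow> X \<le> l \<Longrightarrow> q - X *\<^sub>R E \<in> closure \<Omega> - \<Omega>"
    and beyond: "\<And>X. 0 < X \<Longrightarrow> q + X *\<^sub>R E \<notin> closure \<Omega>"
    and enter: "\<And>t. 0 < t \<Longrightarrow> q + t *\<^sub>R u \<in> \<Omega>"
  shows False
proof -
  have q: "q \<in> closure \<Omega>" using behind[of 0] \<open>0 < l\<close> by simp
  have "E \<notin> AC" using asymptotic_cone_closure[OF _ q, of E 1] beyond[of 1] by auto
  define h where "h n = inverse (real (Suc n))" for n
  have h: "0 < h n" for n by (simp add: h_def)
  define x where "x n = q + h n *\<^sub>R u" for n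
  have x: "x n \<in> \<Omega>" for n using enter h by (simp add: x_def)
  define r where "r n = exit_time \<Omega> (x n) E" for n
  note r_pos = exit_time_pos[OF open_domain convex_domain x \<open>E \<notin> AC\<close>, folded r_def]
  note mem_iff_r = mem_iff_less_exit_time[OF open_domain convex_domain x \<open>E \<notin> AC\<close>, folded r_def]
  note exit_cl = exit_point_in_closure[OF open_domain convex_domain x \<open>E \<notin> AC\<close>, folded r_def]
  have "h \<longlonglongrightarrow> 0" unfolding h_def[abs_def] by (rule LIMSEQ_inverse_real_of_nat)
  then have "x \<longlonglongrightarrow> q + 0 *\<^sub>R u" unfolding x_def[abs_def] by (intro tendsto_intros)
  then have "r \<longlonglongrightarrow> 0"
    unfolding r_def[abs_def] using beyond
    by (intro exit_time_tendsto_zero[OF open_domain convex_domain x _ \<open>E \<notin> AC\<close>]) auto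
  have r_scaled: "\<forall>\<^sub>F n in sequentially. s * r n \<le> l" if "0 \<le> s" for s
  proof -
    have "(\<lambda>n. s * r n) \<longlonglongrightarrow> s * 0" by (intro tendsto_intros \<open>r \<longlonglongrightarrow> 0\<close>)
    from order_tendstoD(2)[OF this[simplified] \<open>0 < l\<close>] show ?thesis
      by eventually_elim simp
  qed
  have comb: "x n + \<sigma> *\<^sub>R (r n *\<^sub>R E) + \<tau> *\<^sub>R (h n *\<^sub>R u)
      = (q - (- \<sigma> * r n) *\<^sub>R E) + ((1 + \<tau>) * h n) *\<^sub>R u" for n \<sigma> \<tau>
    by (simp add: x_def algebra_simps)
  have behind_up: "(q - X *\<^sub>R E) + t *\<^sub>R u \<in> closure \<Omega>" if "0 \<le> X" "X \<le> l" "0 \<le> t" for X t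
    using behind[OF that(1,2)] asymptotic_cone_closure[OF u _ that(3)] by blast
  obtain y R U where "y \<in> \<Omega>"
    and lim_cl: "\<And>\<sigma> \<tau>. \<forall>\<^sub>F n in sequentially. x n + \<sigma> *\<^sub>R (r n *\<^sub>R E) + \<tau> *\<^sub>R (h n *\<^sub>R u) \<in> closure \<Omega>
      \<Longrightarrow> y + \<sigma> *\<^sub>R R + \<tau> *\<^sub>R U \<in> closure \<Omega>"
    and lim_out: "\<And>\<sigma> \<tau>. \<forall>\<^sub>F n in sequentially. x n + \<sigma> *\<^sub>R (r n *\<^sub>R E) + \<tau> *\<^sub>R (h n *\<^sub>R u) \<notin> \<Omega>
      \<Longrightarrow> y + \<sigma> *\<^sub>R R + \<tau> *\<^sub>R U \<notin> \<Omega>"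
  proof (rule rescaled_limit[of x "\<lambda>n. r n *\<^sub>R E" "\<lambda>n. h n *\<^sub>R u"])
    show "\<forall>\<^sub>F n in sequentially. x n + r n *\<^sub>R E \<in> closure \<Omega> \<and> x n - r n *\<^sub>R E \<in> closure \<Omega>"
      using r_scaled[OF zero_le_one]
    proof eventually_elim
      case (elim n)
      then show ?case
        using exit_cl[of n] behind_up[of "r n" "h n"] r_pos[of n] h[of n] by (simp add: x_def algebra_simps)
    qed
    have "x n + h n *\<^sub>R u = q + (h n + h n) *\<^sub>R u" for n
      unfolding x_def scaleR_add_left by (rule add.assoc)
    then have "x n + h n *\<^sub>R u \<in> \<Omega>" for n
      using enter[of "h n + h n"] h[of n] by simp
    then show "\<forall>\<^sub>F n in sequentially. x n + h n *\<^sub>R u \<in> closure \<Omega> \<and> x n - h n *\<^sub>R u \<in> closure \<Omega>"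
      using q closure_subset by (intro always_eventually) (auto simp: x_def)
  qed (use x in blast)+
  have "R \<noteq> 0"
  proof
    assume "R = 0"
    have "\<forall>\<^sub>F n in sequentially. x n + 1 *\<^sub>R (r n *\<^sub>R E) + 0 *\<^sub>R (h n *\<^sub>R u) \<notin> \<Omega>"
      using mem_iff_r r_pos by (intro always_eventually) (simp add: less_imp_le)
    then show False using lim_out \<open>y \<in> \<Omega>\<close> \<open>R = 0\<close> by fastforce
  qed
  have "- R \<in> AC"
  proof (rule asymptotic_cone_if_ray_in_closure[OF open_domain convex_domain])
    show "y \<in> closure \<Omega>" using \<open>y \<in> \<Omega>\<close> closure_subset by blast
    fix t :: real assume "0 \<le> t"
    have "\<forall>\<^sub>F n in sequentially. x n + (- t) *\<^sub>R (r n *\<^sub>R E) + 0 *\<^sub>R (h n *\<^sub>R u) \<in> closure \<Omega>"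
      using r_scaled[OF \<open>0 \<le> t\<close>]
    proof eventually_elim
      case (elim n)
      then show ?case
        unfolding comb using behind_up[of "t * r n" "h n"] \<open>0 \<le> t\<close> r_pos[of n] h[of n] by simp
    qed
    then show "y + t *\<^sub>R - R \<in> closure \<Omega>" using lim_cl by fastforce
  qed
  moreover have "U \<in> AC"
  proof (rule asymptotic_cone_if_ray_in_closure[OF open_domain convex_domain])
    show "y \<in> closure \<Omega>" using \<open>y \<in> \<Omega>\<close> closure_subset by blast
    fix t :: real assume "0 \<le> t"
    have "x n + 0 *\<^sub>R (r n *\<^sub>R E) + t *\<^sub>R (h n *\<^sub>R u) \<in> \<Omega>" for n
      unfolding comb using enter[of "(1 + t) * h n"] h[of n] \<open>0 \<le> t\<close> by simp
    then have "\<forall>\<^sub>F n in sequentially. x n + 0 *\<^sub>R (r n *\<^sub>R E) + t *\<^sub>R (h n *\<^sub>R u) \<in> closure \<Omega>"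
      using closure_subset by (intro always_eventually) blast
    then show "y + t *\<^sub>R U \<in> closure \<Omega>" using lim_cl by fastforce
  qed
  ultimately obtain s where "0 \<le> s" "U = s *\<^sub>R - R"
    using asymptotic_cone_multiple[OF span] \<open>R \<noteq> 0\<close> by (metis neg_0_equal_iff_equal)
  have "\<forall>\<^sub>F n in sequentially. x n + (- s) *\<^sub>R (r n *\<^sub>R E) + (- 1) *\<^sub>R (h n *\<^sub>R u) \<notin> \<Omega>"
    using r_scaled[OF \<open>0 \<le> s\<close>]
  proof eventually_elim
    case (elim n)
    then show ?case
      unfolding comb using behind[of "s * r n"] \<open>0 \<le> s\<close> r_pos[of n] by simp
  qed
  then have "y + (- s) *\<^sub>R R + (- 1) *\<^sub>R U \<notin> \<Omega>" by (rule lim_out)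
  then show False using \<open>y \<in> \<Omega>\<close> \<open>U = s *\<^sub>R - R\<close> by simp
qed

text \<open>Blow up at \<open>q + h (E + u)\<close>, \<open>h \<rightarrow> 0\<close>: both edges of the corner become directions of the
  asymptotic cone, hence parallel, and the corner itself is moved onto the interior limit point.\<close>
lemma no_corner:
  assumes span: "AC \<subseteq> span {u}" and u: "u \<in> AC"
    and face: "\<And>s. 0 \<le> s \<Longrightarrow> s \<le> 1 \<Longrightarrow> q + s *\<^sub>R E \<in> closure \<Omega> - \<Omega>"
    and corner: "\<And>t. 0 \<le> t \<Longrightarrow> q + t *\<^sub>R u \<notin> \<Omega>"
    and inside: "q + E + u \<in> \<Omega>"
  shows False
proof -
  have q: "q \<in> closure \<Omega>" using face[of 0] by simp
  define h where "h n = 1 / (real n + 2)" for n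
  have h: "0 < h n" "h n \<le> 1 / 2" for n by (auto simp: h_def)
  define x where "x n = q + h n *\<^sub>R (E + u)" for n
  have x: "x n \<in> \<Omega>" for n
    using open_convex_shrink[OF open_domain convex_domain q inside, of "h n"] h[of n]
    by (simp add: x_def)
  have comb: "x n + \<sigma> *\<^sub>R (h n *\<^sub>R E) + \<tau> *\<^sub>R (h n *\<^sub>R u)
      = q + ((1 + \<sigma>) * h n) *\<^sub>R E + ((1 + \<tau>) * h n) *\<^sub>R u" for n \<sigma> \<tau>
    by (simp add: x_def algebra_simps)
  have face_up: "q + \<alpha> *\<^sub>R E + \<beta> *\<^sub>R u \<in> closure \<Omega>" if "0 \<le> \<alpha>" "\<alpha> \<le> 1" "0 \<le> \<beta>" for \<alpha> \<beta>
    using face[OF that(1,2)] asymptotic_cone_closure[OF u _ that(3)] by blast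
  have near: "x n + \<sigma> *\<^sub>R (h n *\<^sub>R E) + \<tau> *\<^sub>R (h n *\<^sub>R u) \<in> closure \<Omega>"
    if "-1 \<le> \<sigma>" "(1 + \<sigma>) * h n \<le> 1" "-1 \<le> \<tau>" for n \<sigma> \<tau>
    unfolding comb using that h[of n] by (intro face_up) auto
  have h1: "h n \<le> 1" "(1 + 1) * h n \<le> 1" for n using h[of n] by simp_all
  obtain y A B where "y \<in> \<Omega>"
    and lim_cl: "\<And>\<sigma> \<tau>. \<forall>\<^sub>F n in sequentially. x n + \<sigma> *\<^sub>R (h n *\<^sub>R E) + \<tau> *\<^sub>R (h n *\<^sub>R u) \<in> closure \<Omega>
      \<Longrightarrow> y + \<sigma> *\<^sub>R A + \<tau> *\<^sub>R B \<in> closure \<Omega>"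
    and lim_out: "\<And>\<sigma> \<tau>. \<forall>\<^sub>F n in sequentially. x n + \<sigma> *\<^sub>R (h n *\<^sub>R E) + \<tau> *\<^sub>R (h n *\<^sub>R u) \<notin> \<Omega>
      \<Longrightarrow> y + \<sigma> *\<^sub>R A + \<tau> *\<^sub>R B \<notin> \<Omega>"
  proof (rule rescaled_limit[of x "\<lambda>n. h n *\<^sub>R E" "\<lambda>n. h n *\<^sub>R u"])
    have "x n + h n *\<^sub>R E \<in> closure \<Omega> \<and> x n - h n *\<^sub>R E \<in> closure \<Omega>" for n
      using near[of 1 n 0] near[of "-1" n 0] h1[of n] by simp
    then show "\<forall>\<^sub>F n in sequentially. x n + h n *\<^sub>R E \<in> closure \<Omega> \<and> x n - h n *\<^sub>R E \<in> closure \<Omega>"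
      by (simp add: always_eventually)
    have "x n + h n *\<^sub>R u \<in> closure \<Omega> \<and> x n - h n *\<^sub>R u \<in> closure \<Omega>" for n
      using near[of 0 n 1] near[of 0 n "-1"] h1[of n] by simp
    then show "\<forall>\<^sub>F n in sequentially. x n + h n *\<^sub>R u \<in> closure \<Omega> \<and> x n - h n *\<^sub>R u \<in> closure \<Omega>"
      by (simp add: always_eventually)
  qed (use x in blast)+
  have y: "y \<in> closure \<Omega>" using \<open>y \<in> \<Omega>\<close> closure_subset by blast
  have "A \<in> AC"
  proof (rule asymptotic_cone_if_ray_in_closure[OF open_domain convex_domain y])
    fix s :: real assume "0 \<le> s"
    have "\<forall>\<^sub>F n in sequentially. (1 + s) * h n \<le> 1"
      using eventually_real_ge[of "s - 1"] by eventually_elim (simp add: h_def)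
    then have "\<forall>\<^sub>F n in sequentially. x n + s *\<^sub>R (h n *\<^sub>R E) + 0 *\<^sub>R (h n *\<^sub>R u) \<in> closure \<Omega>"
    proof eventually_elim
      case (elim n)
      then show ?case using near[of s n 0] \<open>0 \<le> s\<close> by simp
    qed
    then show "y + s *\<^sub>R A \<in> closure \<Omega>" using lim_cl by fastforce
  qed
  moreover have "B \<in> AC"
  proof (rule asymptotic_cone_if_ray_in_closure[OF open_domain convex_domain y])
    fix t :: real assume "0 \<le> t"
    have "\<forall>\<^sub>F n in sequentially. x n + 0 *\<^sub>R (h n *\<^sub>R E) + t *\<^sub>R (h n *\<^sub>R u) \<in> closure \<Omega>"
      using near[of 0 _ t] h1(1) \<open>0 \<le> t\<close> by (intro always_eventually) simp
    then show "y + t *\<^sub>R B \<in> closure \<Omega>" using lim_cl by fastforce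
  qed
  moreover have "A \<noteq> 0"
  proof
    assume "A = 0"
    have "\<forall>\<^sub>F n in sequentially. x n + (- 1) *\<^sub>R (h n *\<^sub>R E) + 0 *\<^sub>R (h n *\<^sub>R u) \<notin> \<Omega>"
      unfolding comb using corner h by (intro always_eventually) (simp add: less_imp_le)
    then show False using lim_out \<open>y \<in> \<Omega>\<close> \<open>A = 0\<close> by fastforce
  qed
  ultimately obtain s where "0 \<le> s" "B = s *\<^sub>R A"
    using asymptotic_cone_multiple[OF span] by blast
  have "\<forall>\<^sub>F n in sequentially. (1 + s) * h n \<le> 1"
    using eventually_real_ge[of "s - 1"] by eventually_elim (simp add: h_def)
  then have "\<forall>\<^sub>F n in sequentially. x n + s *\<^sub>R (h n *\<^sub>R E) + (- 1) *\<^sub>R (h n *\<^sub>R u) \<notin> \<Omega>"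
  proof eventually_elim
    case (elim n)
    then show ?case unfolding comb using face[of "(1 + s) * h n"] \<open>0 \<le> s\<close> h[of n] by simp
  qed
  then have "y + s *\<^sub>R A + (- 1) *\<^sub>R B \<notin> \<Omega>" by (rule lim_out)
  then show False using \<open>y \<in> \<Omega>\<close> \<open>B = s *\<^sub>R A\<close> by simp
qed

text \<open>Follow the boundary line through \<open>p\<close> in direction \<open>E\<close> to the far end \<open>q\<close> of the face; the ray
  from \<open>q\<close> in direction \<open>u\<close> either enters \<open>\<Omega>\<close> (an endpoint) or stays outside (a corner).\<close>
lemma no_entered_face:
  assumes span: "AC \<subseteq> span {u}" and u: "u \<in> AC"
    and p: "p \<notin> \<Omega>" "p + E \<in> closure \<Omega>" "p - E \<in> closure \<Omega>" and "E \<notin> span {u}"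
    and enter: "\<And>t. 0 < t \<Longrightarrow> p + t *\<^sub>R u \<in> \<Omega>"
  shows False
proof -
  note line = line_avoids_open_convex[OF open_domain convex_domain p]
  have p_cl: "p \<in> closure \<Omega>"
    using convex_segment_point[OF convex_closure[OF convex_domain] p(3,2), of "1/2"] by simp
  have "E \<notin> AC" using span \<open>E \<notin> span {u}\<close> by blast
  then obtain \<sigma> where "1 \<le> \<sigma>" "p + \<sigma> *\<^sub>R E \<in> closure \<Omega>"
    and far: "\<And>X. 0 < X \<Longrightarrow> p + (\<sigma> + X) *\<^sub>R E \<notin> closure \<Omega>"
    using closure_ray_far_end[OF open_domain convex_domain p_cl p(2)] by blast
  define q where "q = p + \<sigma> *\<^sub>R E"
  have q: "q \<in> closure \<Omega>" "q \<notin> \<Omega>" using \<open>p + \<sigma> *\<^sub>R E \<in> closure \<Omega>\<close> line by (auto simp: q_def)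
  have behind: "q - X *\<^sub>R E \<in> closure \<Omega> - \<Omega>" if "0 \<le> X" "X \<le> \<sigma> + 1" for X
  proof -
    define \<theta> where "\<theta> = (\<sigma> + 1 - X) / (\<sigma> + 1)"
    have "(p - E) + \<theta> *\<^sub>R (q - (p - E)) \<in> closure \<Omega>"
      using that \<open>1 \<le> \<sigma>\<close> q(1) p(3) unfolding \<theta>_def
      by (intro convex_segment_point[OF convex_closure[OF convex_domain]]) auto
    moreover have "q - (p - E) = (\<sigma> + 1) *\<^sub>R E" by (simp add: q_def algebra_simps)
    then have e1: "(p - E) + \<theta> *\<^sub>R (q - (p - E)) = (p - E) + (\<theta> * (\<sigma> + 1)) *\<^sub>R E" by simp
    have e2: "\<theta> * (\<sigma> + 1) = \<sigma> + 1 - X" using \<open>1 \<le> \<sigma>\<close> by (simp add: \<theta>_def)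
    have e3: "(p - E) + (\<sigma> + 1 - X) *\<^sub>R E = p + (\<sigma> - X) *\<^sub>R E" by (simp add: algebra_simps)
    have "q - X *\<^sub>R E = p + (\<sigma> - X) *\<^sub>R E" by (simp add: q_def algebra_simps)
    ultimately show ?thesis using line by (simp only: e1 e2 e3 Diff_iff) blast
  qed
  have beyond: "q + X *\<^sub>R E \<notin> closure \<Omega>" if "0 < X" for X
    using far[OF that] by (simp add: q_def algebra_simps)
  show False
  proof (cases "\<exists>t0>0. q + t0 *\<^sub>R u \<in> \<Omega>")
    case True
    then have "q + t *\<^sub>R u \<in> \<Omega>" if "0 < t" for t
      using ray_enters_open_convex[OF open_domain convex_domain u q(1) _ _ that] by blast
    then show False
      using no_endpoint[where l = "\<sigma> + 1", OF span u _ behind beyond] \<open>1 \<le> \<sigma>\<close> by simp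
  next
    case False
    then have corner: "q + t *\<^sub>R u \<notin> \<Omega>" if "0 \<le> t" for t
      using that q(2) by (cases "t = 0") auto
    have "(p + u) + ((\<sigma> - 1) / \<sigma>) *\<^sub>R ((q + u) - (p + u)) \<in> \<Omega>"
      using enter[of 1] asymptotic_cone_closure[OF u q(1), of 1] \<open>1 \<le> \<sigma>\<close>
      by (intro open_convex_segment_point[OF open_domain convex_domain]) auto
    moreover have "(q + u) - (p + u) = \<sigma> *\<^sub>R E" by (simp add: q_def)
    moreover have "(\<sigma> - 1) / \<sigma> * \<sigma> = \<sigma> - 1" using \<open>1 \<le> \<sigma>\<close> by simp
    moreover have "(p + u) + (\<sigma> - 1) *\<^sub>R E = q + - E + u" by (simp add: q_def algebra_simps)
    ultimately have "q + - E + u \<in> \<Omega>" by (metis scaleR_scaleR)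
    moreover have "q + s *\<^sub>R - E \<in> closure \<Omega> - \<Omega>" if "0 \<le> s" "s \<le> 1" for s
      using behind[of s] that \<open>1 \<le> \<sigma>\<close> by simp
    ultimately show False using no_corner[OF span u _ corner] by blast
  qed
qed

lemma frontier_segment_centred:
  assumes "a \<noteq> b" "closed_segment a b \<subseteq> frontier \<Omega>"
  obtains m e where "e \<notin> AC" "\<And>s. \<bar>s\<bar> \<le> 1 \<Longrightarrow> m + s *\<^sub>R e \<in> closure \<Omega> - \<Omega>"
proof -
  define m where "m = (1/2) *\<^sub>R (a + b)"
  define e where "e = (1/2) *\<^sub>R (b - a)"
  have "e \<noteq> 0" using \<open>a \<noteq> b\<close> by (simp add: e_def)
  have seg: "m + s *\<^sub>R e \<in> closure \<Omega> - \<Omega>" if "\<bar>s\<bar> \<le> 1" for s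
  proof -
    have "m + s *\<^sub>R e = (1 - (1 + s) / 2) *\<^sub>R a + ((1 + s) / 2) *\<^sub>R b"
      by (simp add: m_def e_def algebra_simps add_divide_distrib diff_divide_distrib)
    then have "m + s *\<^sub>R e \<in> closed_segment a b"
      using that by (auto simp: in_segment intro!: exI[of _ "(1 + s) / 2"])
    then show ?thesis
      using assms(2) open_domain by (auto simp: frontier_def interior_open)
  qed
  show ?thesis
  proof (cases "e \<in> AC")
    case True
    then have "- e \<notin> AC" using AC_pointed \<open>e \<noteq> 0\<close> by blast
    moreover have "m + s *\<^sub>R - e \<in> closure \<Omega> - \<Omega>" if "\<bar>s\<bar> \<le> 1" for s
      using seg[of "- s"] that by simp
    ultimately show ?thesis using that by blast
  qed (use seg that in blast)
qed

lemma entered_face_from_limit: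
  assumes span: "AC \<subseteq> span {u}" and u: "u \<in> AC"
    and "y \<in> \<Omega>" "W \<in> AC" "E \<noteq> 0"
    and p: "y - W \<notin> \<Omega>" "y - W + E \<in> closure \<Omega>" "y - W - E \<in> closure \<Omega>"
  shows "E \<notin> span {u}" and "\<And>t. 0 < t \<Longrightarrow> y - W + t *\<^sub>R u \<in> \<Omega>"
proof -
  have "W \<noteq> 0" using p(1) \<open>y \<in> \<Omega>\<close> by auto
  then obtain c where "0 \<le> c" "u = c *\<^sub>R W"
    using asymptotic_cone_multiple[OF span \<open>W \<in> AC\<close> _ u] by blast
  have "c \<noteq> 0" using span \<open>W \<in> AC\<close> \<open>W \<noteq> 0\<close> \<open>u = c *\<^sub>R W\<close> by auto
  have p_cl: "y - W \<in> closure \<Omega>"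
    using convex_segment_point[OF convex_closure[OF convex_domain] p(3,2), of "1/2"] by simp
  have p_u: "y - W + (1 / c) *\<^sub>R u = y" using \<open>c \<noteq> 0\<close> by (simp add: \<open>u = c *\<^sub>R W\<close>)
  show "y - W + t *\<^sub>R u \<in> \<Omega>" if "0 < t" for t
    using ray_enters_open_convex[OF open_domain convex_domain u p_cl _ _ that, of "1 / c"]
      \<open>0 \<le> c\<close> \<open>c \<noteq> 0\<close> p_u \<open>y \<in> \<Omega>\<close> by simp
  show "E \<notin> span {u}"
  proof
    assume "E \<in> span {u}"
    then obtain k where "E = k *\<^sub>R u" by (auto simp: span_singleton)
    then have "y - W + (1 / (c * k)) *\<^sub>R E = y" using \<open>E \<noteq> 0\<close> p_u by auto
    then show False
      using line_avoids_open_convex[OF open_domain convex_domain p] \<open>y \<in> \<Omega>\<close> by metis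
  qed
qed

text \<open>Blow up at the midpoint \<open>m\<close> of the segment, approaching it from an interior point: the
  segment survives in the limit, and the approach direction becomes the asymptotic direction.\<close>
lemma entered_face_from_segment:
  assumes span: "AC \<subseteq> span {u}" and u: "u \<in> AC"
    and "a \<noteq> b" "closed_segment a b \<subseteq> frontier \<Omega>"
  obtains p E where "p \<notin> \<Omega>" "p + E \<in> closure \<Omega>" "p - E \<in> closure \<Omega>" "E \<notin> span {u}"
    "\<And>t. 0 < t \<Longrightarrow> p + t *\<^sub>R u \<in> \<Omega>"
proof -
  obtain m e where "e \<notin> AC" and face: "\<And>s. \<bar>s\<bar> \<le> 1 \<Longrightarrow> m + s *\<^sub>R e \<in> closure \<Omega> - \<Omega>"
    using frontier_segment_centred[OF assms(3,4)] by blast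
  have m: "m \<in> closure \<Omega>" using face[of 0] by simp
  obtain T where "m + T *\<^sub>R e \<notin> closure \<Omega>"
    using asymptotic_cone_if_ray_in_closure[OF open_domain convex_domain m] \<open>e \<notin> AC\<close> by blast
  obtain x0 where x0: "x0 \<in> \<Omega>" using nonempty_domain by blast
  define w where "w = x0 - m"
  define h where "h n = 1 / (real n + 3)" for n
  have h: "0 < h n" "h n \<le> 1 / 3" for n by (auto simp: h_def)
  define x where "x n = m + h n *\<^sub>R w" for n
  have x: "x n \<in> \<Omega>" for n
    using open_convex_shrink[OF open_domain convex_domain m x0, of "h n"] h[of n]
    by (simp add: x_def w_def)
  have comb: "x n + \<tau> *\<^sub>R (h n *\<^sub>R w) + \<sigma> *\<^sub>R ((1/2) *\<^sub>R e)
      = m + ((1 + \<tau>) * h n) *\<^sub>R (x0 - m) + (\<sigma> / 2) *\<^sub>R e" for n \<tau> \<sigma>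
    by (simp add: x_def w_def algebra_simps)
  have near: "x n + \<tau> *\<^sub>R (h n *\<^sub>R w) + \<sigma> *\<^sub>R ((1/2) *\<^sub>R e) \<in> closure \<Omega>"
    if "-1 \<le> \<tau>" "(1 + \<tau>) * h n \<le> 2 / 3" "\<bar>\<sigma>\<bar> \<le> 2 * (1 - (1 + \<tau>) * h n)" for n \<tau> \<sigma>
    unfolding comb using that h[of n] face x0 closure_subset
    by (intro convex_triangle_point[OF convex_closure[OF convex_domain]]) auto
  obtain y W E where "y \<in> \<Omega>"
    and lim_cl: "\<And>\<tau> \<sigma>. \<forall>\<^sub>F n in sequentially. x n + \<tau> *\<^sub>R (h n *\<^sub>R w) + \<sigma> *\<^sub>R ((1/2) *\<^sub>R e) \<in> closure \<Omega>
      \<Longrightarrow> y + \<tau> *\<^sub>R W + \<sigma> *\<^sub>R E \<in> closure \<Omega>"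
    and lim_out: "\<And>\<tau> \<sigma>. \<forall>\<^sub>F n in sequentially. x n + \<tau> *\<^sub>R (h n *\<^sub>R w) + \<sigma> *\<^sub>R ((1/2) *\<^sub>R e) \<notin> \<Omega>
      \<Longrightarrow> y + \<tau> *\<^sub>R W + \<sigma> *\<^sub>R E \<notin> \<Omega>"
  proof (rule rescaled_limit[of x "\<lambda>n. h n *\<^sub>R w" "\<lambda>n. (1/2) *\<^sub>R e"])
    have "x n + h n *\<^sub>R w \<in> closure \<Omega> \<and> x n - h n *\<^sub>R w \<in> closure \<Omega>" for n
      using near[of 1 n 0] near[of "-1" n 0] h[of n] by simp
    then show "\<forall>\<^sub>F n in sequentially. x n + h n *\<^sub>R w \<in> closure \<Omega> \<and> x n - h n *\<^sub>R w \<in> closure \<Omega>"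
      by (simp add: always_eventually)
    have "x n + (1/2) *\<^sub>R e \<in> closure \<Omega> \<and> x n - (1/2) *\<^sub>R e \<in> closure \<Omega>" for n
      using near[of 0 n 1] near[of 0 n "-1"] h[of n] by simp
    then show "\<forall>\<^sub>F n in sequentially. x n + (1/2) *\<^sub>R e \<in> closure \<Omega> \<and> x n - (1/2) *\<^sub>R e \<in> closure \<Omega>"
      by (simp add: always_eventually)
  qed (use x in blast)+
  have cl: "y + \<tau> *\<^sub>R W + \<sigma> *\<^sub>R E \<in> closure \<Omega>" if "-1 \<le> \<tau>" "\<bar>\<sigma>\<bar> \<le> 1" for \<tau> \<sigma>
  proof (rule lim_cl)
    have "\<forall>\<^sub>F n in sequentially. (1 + \<tau>) * h n \<le> 1 / 2"
      using eventually_real_ge[of "2 * \<tau> - 1"] by eventually_elim (simp add: h_def field_simps)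
    then show "\<forall>\<^sub>F n in sequentially. x n + \<tau> *\<^sub>R (h n *\<^sub>R w) + \<sigma> *\<^sub>R ((1/2) *\<^sub>R e) \<in> closure \<Omega>"
    proof eventually_elim
      case (elim n)
      then show ?case using near[of \<tau> n \<sigma>] that h[of n] by simp
    qed
  qed
  have "x n + (- 1) *\<^sub>R (h n *\<^sub>R w) + 0 *\<^sub>R ((1/2) *\<^sub>R e) \<notin> \<Omega>" for n
    unfolding comb using face[of 0] by simp
  then have "y - W \<notin> \<Omega>" using lim_out[of "- 1" 0] by (simp add: always_eventually)
  have y: "y \<in> closure \<Omega>" using \<open>y \<in> \<Omega>\<close> closure_subset by blast
  have "W \<in> AC"
    using cl[of _ 0] by (intro asymptotic_cone_if_ray_in_closure[OF open_domain convex_domain y]) simp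
  have "E \<noteq> 0"
  proof
    assume "E = 0"
    have "(\<lambda>n. 1 / real (n + 3)) \<longlonglongrightarrow> 0"
      by (rule LIMSEQ_ignore_initial_segment[OF lim_const_over_n])
    then have "h \<longlonglongrightarrow> 0" by (simp add: h_def[abs_def])
    then have "(\<lambda>n. m + h n *\<^sub>R w + T *\<^sub>R e) \<longlonglongrightarrow> m + 0 *\<^sub>R w + T *\<^sub>R e"
      by (intro tendsto_intros)
    moreover have "m + T *\<^sub>R e \<in> - closure \<Omega>" using \<open>m + T *\<^sub>R e \<notin> closure \<Omega>\<close> by simp
    ultimately have "\<forall>\<^sub>F n in sequentially. m + h n *\<^sub>R w + T *\<^sub>R e \<in> - closure \<Omega>"
      by (intro topological_tendstoD) auto
    then have "\<forall>\<^sub>F n in sequentially. x n + 0 *\<^sub>R (h n *\<^sub>R w) + (2 * T) *\<^sub>R ((1/2) *\<^sub>R e) \<notin> \<Omega>"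
      by eventually_elim (use closure_subset in \<open>auto simp: x_def\<close>)
    then show False using lim_out \<open>E = 0\<close> \<open>y \<in> \<Omega>\<close> by fastforce
  qed
  have "y - W + E \<in> closure \<Omega>" "y - W - E \<in> closure \<Omega>"
    using cl[of "-1" 1] cl[of "-1" "-1"] by (simp_all add: algebra_simps)
  then show ?thesis
    using that[OF \<open>y - W \<notin> \<Omega>\<close>] entered_face_from_limit[OF span u \<open>y \<in> \<Omega>\<close> \<open>W \<in> AC\<close> \<open>E \<noteq> 0\<close>
        \<open>y - W \<notin> \<Omega>\<close>] by blast
qed

end

theorem proposition5p5:
  fixes \<Omega> :: "'a::euclidean_space set"
  assumes "affine_domain \<Omega>" and "quasi_homogeneous \<Omega>" and "properly_convex \<Omega>"
  shows "strictly_convex \<Omega> \<longleftrightarrow> dim (asymptotic_cone \<Omega>) = 1"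
proof -
  obtain K G where K: "compact K" "K \<subseteq> \<Omega>" and G: "aff_subgroup G \<Omega>" "(\<Union>g\<in>G. g ` K) = \<Omega>"
    using assms(2) unfolding quasi_homogeneous_def by blast
  interpret quasi_homogeneous_convex_domain \<Omega> K
  proof
    show "open \<Omega>" "\<Omega> \<noteq> {}" using assms(1) by (auto simp: affine_domain_def)
    show "convex \<Omega>" "\<And>x v. v \<noteq> 0 \<Longrightarrow> \<exists>t. x + t *\<^sub>R v \<notin> \<Omega>"
      using assms(3) by (auto simp: properly_convex_def)
    show "\<And>x. x \<in> \<Omega> \<Longrightarrow> \<exists>g\<in>Aut_aff \<Omega>. \<exists>y\<in>K. g y = x"
      using G by (auto simp: aff_subgroup_def)
  qed (fact K)+
  obtain u where u: "u \<in> asymptotic_cone \<Omega>" "u \<noteq> 0" using asymptotic_cone_nontrivial by blast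
  note dim_1 = dim_eq_1_iff_subset_span[OF u]
  show ?thesis
  proof
    assume "strictly_convex \<Omega>"
    then show "dim (asymptotic_cone \<Omega>) = 1"
      using asymptotic_cone_subset_span_if_strictly_convex u dim_1 by blast
  next
    assume "dim (asymptotic_cone \<Omega>) = 1"
    then have span: "asymptotic_cone \<Omega> \<subseteq> span {u}" using dim_1 by blast
    have "\<not> closed_segment a b \<subseteq> frontier \<Omega>" if "a \<noteq> b" for a b
    proof
      assume "closed_segment a b \<subseteq> frontier \<Omega>"
      then obtain p E where "p \<notin> \<Omega>" "p + E \<in> closure \<Omega>" "p - E \<in> closure \<Omega>" "E \<notin> span {u}"
        "\<And>t. 0 < t \<Longrightarrow> p + t *\<^sub>R u \<in> \<Omega>"
        using entered_face_from_segment[OF span u(1) \<open>a \<noteq> b\<close>] by blast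
      then show False by (rule no_entered_face[OF span u(1)])
    qed
    then show "strictly_convex \<Omega>" using convex_domain by (auto simp: strictly_convex_def)
  qed
qed

end
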